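(* Let $(\mathbb{X},d)$ be a complete metric space, let $F=(\mathbb{X};f_1,\dots,f_N)$ be an invertible iterated function system, and let $A$ be a point-fibred attractor of $F$ with basin $B$ and fast basin $\widehat{B}=\bigcup_{k\ge0}(F^* )^k(A)$. Then $F^*(\widehat{B})=\widehat{B}$, and $\widehat{B}$ is the smallest subset of $\mathbb{X}$ that contains $A$ and is invariant under $F^*$, i.e. $\widehat{B}=\bigcap\{D\subseteq\mathbb{X}: F^*(D)=D,\ A\subseteq D\}$. Moreover: \begin{enumerate} \item if $A^o\neq\emptyset$, then $B\subseteq\widehat{B}$; \item if $A^o=\emptyset$, then $\widehat{B}^o=\emptyset$. \end{enumerate}
   Context: $S^o$ denotes the interior of $S$. An IFS $F=(\mathbb{X};f_1,\dots,f_N)$ consists of continuous maps $f_i:\mathbb{X}\to\mathbb{X}$; it is invertible if each $f_i$ is a homeomorphism, and then $F^*=(\mathbb{X};f_1^{-1},\dots,f_N^{-1})$ with $F^*(X)=\bigcup_i f_i^{-1}(X)$ and $(F^* )^k$ its $k$-fold iterate, $(F^* )^0(X)=X$. Similarly $F(X)=\bigcup_i f_i(X)$. A nonempty compact $A$ is an attractor of $F$ if $F(A)=A$ and there is an open $U\supset A$ with $F^k(S)\to A$ in the Hausdorff metric for every nonempty compact $S\subset U$; the basin $B$ is the union of all such open $U$. For $\omega\in[N]^\infty$ ($[N]=\{1,\dots,N\}$) let $f_{\omega|k}=f_{\omega_1}\circ\cdots\circ f_{\omega_k}$. $A$ is point-fibred if for every $\omega\in[N]^\infty$ and every nonempty compact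 $C\subset B$ the sequence $f_{\omega|k}(C)$ converges in the Hausdorff metric to a singleton independent of $C$. *)

theory Defs
  imports "HOL-Analysis.Analysis"
begin

text \<open>Hausdorff distance between two (nonempty, bounded) subsets of a metric space.
  Only ever applied to nonempty compact sets below.\<close>
definition hausdist :: "'a::metric_space set \<Rightarrow> 'a set \<Rightarrow> real" where
  "hausdist S T = max (SUP x\<in>S. infdist x T) (SUP y\<in>T. infdist y S)"

definition ifs_op :: "nat \<Rightarrow> (nat \<Rightarrow> 'a \<Rightarrow> 'a) \<Rightarrow> 'a set \<Rightarrow> 'a set" where
  "ifs_op N f X = (\<Union>i\<in>{1..N}. f i ` X)"

definition ifs_inv_op :: "nat \<Rightarrow> (nat \<Rightarrow> 'a \<Rightarrow> 'a) \<Rightarrow> 'a set \<Rightarrow> 'a set" where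
  "ifs_inv_op N f X = (\<Union>i\<in>{1..N}. f i -` X)"

definition ifs :: "nat \<Rightarrow> (nat \<Rightarrow> 'a::topological_space \<Rightarrow> 'a) \<Rightarrow> bool" where
  "ifs N f \<longleftrightarrow> (\<forall>i\<in>{1..N}. continuous_on UNIV (f i))"

definition invertible_ifs :: "nat \<Rightarrow> (nat \<Rightarrow> 'a::topological_space \<Rightarrow> 'a) \<Rightarrow> bool" where
  "invertible_ifs N f \<longleftrightarrow> (\<forall>i\<in>{1..N}. \<exists>g. homeomorphism UNIV UNIV (f i) g)"

definition attracting_nbhd :: "nat \<Rightarrow> (nat \<Rightarrow> 'a::metric_space \<Rightarrow> 'a) \<Rightarrow> 'a set \<Rightarrow> 'a set \<Rightarrow> bool" where
  "attracting_nbhd N f A U \<longleftrightarrow> open U \<and> A \<subseteq> U \<and>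
     (\<forall>S. S \<noteq> {} \<and> compact S \<and> S \<subseteq> U \<longrightarrow>
        (\<lambda>k. hausdist ((ifs_op N f ^^ k) S) A) \<longlonglongrightarrow> 0)"

definition is_attractor :: "nat \<Rightarrow> (nat \<Rightarrow> 'a::metric_space \<Rightarrow> 'a) \<Rightarrow> 'a set \<Rightarrow> bool" where
  "is_attractor N f A \<longleftrightarrow> A \<noteq> {} \<and> compact A \<and> ifs_op N f A = A \<and>
     (\<exists>U. attracting_nbhd N f A U)"

definition basin :: "nat \<Rightarrow> (nat \<Rightarrow> 'a::metric_space \<Rightarrow> 'a) \<Rightarrow> 'a set \<Rightarrow> 'a set" where
  "basin N f A = \<Union>{U. attracting_nbhd N f A U}"

text \<open>word_comp f w k = f (w 0) o f (w 1) o ... o f (w (k-1))  (i.e. f_{omega|k}).\<close>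
fun word_comp :: "(nat \<Rightarrow> 'a \<Rightarrow> 'a) \<Rightarrow> (nat \<Rightarrow> nat) \<Rightarrow> nat \<Rightarrow> 'a \<Rightarrow> 'a" where
  "word_comp f w 0 = id"
| "word_comp f w (Suc k) = word_comp f w k \<circ> f (w k)"

definition point_fibred :: "nat \<Rightarrow> (nat \<Rightarrow> 'a::metric_space \<Rightarrow> 'a) \<Rightarrow> 'a set \<Rightarrow> bool" where
  "point_fibred N f A \<longleftrightarrow>
     (\<forall>w. (\<forall>k. w k \<in> {1..N}) \<longrightarrow>
        (\<exists>x. \<forall>C. C \<noteq> {} \<and> compact C \<and> C \<subseteq> basin N f A \<longrightarrow>
           (\<lambda>k. hausdist (word_comp f w k ` C) {x}) \<longlonglongrightarrow> 0))"

definition fast_basin :: "nat \<Rightarrow> (nat \<Rightarrow> 'a \<Rightarrow> 'a) \<Rightarrow> 'a set \<Rightarrow> 'a set" where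
  "fast_basin N f A = (\<Union>k. (ifs_inv_op N f ^^ k) A)"

end

theory Submission
  imports Defs
begin

text \<open>
  Since \<open>F(A) = A\<close>, also \<open>A \<subseteq> F\<^sup>*(A)\<close>, so the sets \<open>(F\<^sup>*)\<^sup>k(A)\<close> increase and their union
  is the least \<open>F\<^sup>*\<close>-invariant set containing \<open>A\<close>.
  If \<open>A\<close> contains a ball around \<open>a\<close>, a backward orbit of \<open>a\<close> inside \<open>A\<close> yields a word \<open>\<omega>\<close>
  with \<open>a \<in> f\<^bsub>\<omega>|k\<^esub>(A)\<close> for all \<open>k\<close>. Point-fibredness then makes \<open>a\<close> the fibre point of \<open>\<omega>\<close>,
  so \<open>f\<^bsub>\<omega>|k\<^esub>(x) \<rightarrow> a\<close> for every \<open>x\<close> in the basin; hence \<open>f\<^bsub>\<omega>|k\<^esub>(x) \<in> A\<close> for some \<open>k\<close>,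
  i.e. \<open>x \<in> (F\<^sup>*)\<^sup>k(A)\<close>.
  If \<open>A\<close> has empty interior, each \<open>(F\<^sup>*)\<^sup>k(A)\<close> is a finite union of homeomorphic preimages
  of a closed nowhere dense set, hence closed and nowhere dense, and Baire's theorem applies
  to their countable union.
\<close>

lemma ifs_inv_op_mono: "X \<subseteq> Y \<Longrightarrow> ifs_inv_op N f X \<subseteq> ifs_inv_op N f Y"
  unfolding ifs_inv_op_def by blast

lemma ifs_inv_op_UN: "ifs_inv_op N f (\<Union>k. S k) = (\<Union>k. ifs_inv_op N f (S k))"
  unfolding ifs_inv_op_def by blast

lemma is_attractor_imp_pos:
  assumes "is_attractor N f A"
  shows "1 \<le> N"
proof (rule ccontr)
  assume "\<not> 1 \<le> N"
  then have "ifs_op N f A = {}" unfolding ifs_op_def by auto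
  with assms show False unfolding is_attractor_def by blast
qed

lemma subset_ifs_inv_op:
  assumes "ifs_op N f A \<subseteq> A" and "1 \<le> N"
  shows "A \<subseteq> ifs_inv_op N f A"
  using assms unfolding ifs_op_def ifs_inv_op_def by fastforce

lemma attractor_subset_basin: "is_attractor N f A \<Longrightarrow> A \<subseteq> basin N f A"
  unfolding is_attractor_def basin_def attracting_nbhd_def by blast

lemma ifs_inv_op_iterate_mono:
  assumes "A \<subseteq> ifs_inv_op N f A"
  shows "(ifs_inv_op N f ^^ k) A \<subseteq> (ifs_inv_op N f ^^ Suc k) A"
proof (induction k)
  case 0
  then show ?case using assms by simp
next
  case (Suc k)
  then show ?case by (simp add: ifs_inv_op_mono)
qed

lemma ifs_inv_op_fast_basin:
  assumes "A \<subseteq> ifs_inv_op N f A"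
  shows "ifs_inv_op N f (fast_basin N f A) = fast_basin N f A"
proof -
  let ?P = "\<lambda>k. (ifs_inv_op N f ^^ k) A"
  have "ifs_inv_op N f (fast_basin N f A) = (\<Union>k. ?P (Suc k))"
    by (simp add: fast_basin_def ifs_inv_op_UN)
  also have "\<dots> = (\<Union>k. ?P k)"
    using ifs_inv_op_iterate_mono[OF assms] by (fastforce intro: UN_I[of "Suc _"])
  finally show ?thesis unfolding fast_basin_def .
qed

lemma fast_basin_least:
  assumes "ifs_inv_op N f D \<subseteq> D" and "A \<subseteq> D"
  shows "fast_basin N f A \<subseteq> D"
proof -
  have "(ifs_inv_op N f ^^ k) A \<subseteq> D" for k
  proof (induction k)
    case 0
    then show ?case using assms(2) by simp
  next
    case (Suc k)
    then show ?case using assms(1) ifs_inv_op_mono[OF Suc, of N f] by simp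
  qed
  then show ?thesis unfolding fast_basin_def by blast
qed

lemma fast_basin_eq_Inter_invariant:
  assumes "A \<subseteq> ifs_inv_op N f A"
  shows "fast_basin N f A = \<Inter>{D. ifs_inv_op N f D = D \<and> A \<subseteq> D}"
proof (rule antisym)
  show "fast_basin N f A \<subseteq> \<Inter>{D. ifs_inv_op N f D = D \<and> A \<subseteq> D}"
    by (intro Inter_greatest fast_basin_least) auto
  have "(ifs_inv_op N f ^^ 0) A \<subseteq> fast_basin N f A"
    unfolding fast_basin_def by blast
  then have "A \<subseteq> fast_basin N f A" by simp
  then show "\<Inter>{D. ifs_inv_op N f D = D \<and> A \<subseteq> D} \<subseteq> fast_basin N f A"
    using ifs_inv_op_fast_basin[OF assms] by blast
qed

lemma dist_le_hausdist_singleton: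
  fixes S :: "'a::metric_space set"
  assumes "compact S" and "y \<in> S"
  shows "dist y p \<le> hausdist S {p}"
proof -
  have "bounded ((\<lambda>x. dist x p) ` S)"
    using assms(1) by (intro compact_imp_bounded compact_continuous_image continuous_intros)
  then have "dist y p \<le> (SUP x\<in>S. dist x p)"
    using assms(2) by (intro cSUP_upper bounded_imp_bdd_above)
  then show ?thesis unfolding hausdist_def by simp
qed

lemma tendsto_hausdist_singleton:
  fixes S :: "nat \<Rightarrow> 'a::metric_space set"
  assumes "\<And>k. compact (S k)" and "\<And>k. y k \<in> S k"
    and "(\<lambda>k. hausdist (S k) {p}) \<longlonglongrightarrow> 0"
  shows "y \<longlonglongrightarrow> p"
proof -
  have bound: "dist (y k) p \<le> hausdist (S k) {p}" for k
    using assms(1,2) by (rule dist_le_hausdist_singleton)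
  have "(\<lambda>k. dist (y k) p) \<longlonglongrightarrow> 0"
  proof (rule tendsto_sandwich)
    show "\<forall>\<^sub>F k in sequentially. 0 \<le> dist (y k) p" by simp
    show "\<forall>\<^sub>F k in sequentially. dist (y k) p \<le> hausdist (S k) {p}" using bound by simp
    show "(\<lambda>k. 0::real) \<longlonglongrightarrow> 0" by simp
  qed (rule assms(3))
  then show ?thesis by (rule tendsto_dist_iff[THEN iffD2])
qed

lemma continuous_on_word_comp:
  assumes "ifs N f" and "\<And>k. w k \<in> {1..N}"
  shows "continuous_on UNIV (word_comp f w k)"
proof (induction k)
  case 0
  then show ?case by (simp add: continuous_on_id)
next
  case (Suc k)
  have "continuous_on UNIV (f (w k))" using assms unfolding ifs_def by blast
  then have "continuous_on UNIV (word_comp f w k \<circ> f (w k))"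
    by (rule continuous_on_compose) (rule continuous_on_subset[OF Suc], simp)
  then show ?case by simp
qed

lemma word_comp_vimage_subset:
  assumes "\<And>k. w k \<in> {1..N}"
  shows "word_comp f w k -` A \<subseteq> (ifs_inv_op N f ^^ k) A"
proof (induction k)
  case 0
  then show ?case by simp
next
  case (Suc k)
  have "word_comp f w (Suc k) -` A = f (w k) -` (word_comp f w k -` A)" by auto
  also have "\<dots> \<subseteq> f (w k) -` ((ifs_inv_op N f ^^ k) A)" using Suc by blast
  also have "\<dots> \<subseteq> (ifs_inv_op N f ^^ Suc k) A"
    using assms[of k] unfolding ifs_inv_op_def by auto
  finally show ?case .
qed

lemma backward_word_through_point:
  assumes "A \<subseteq> ifs_op N f A" and "a \<in> A"
  obtains w where "\<And>k. w k \<in> {1..N}" and "\<And>k. a \<in> word_comp f w k ` A"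
proof -
  have "\<forall>y\<in>A. \<exists>iz. fst iz \<in> {1..N} \<and> snd iz \<in> A \<and> y = f (fst iz) (snd iz)"
    using assms(1) unfolding ifs_op_def by fastforce
  then obtain c where c: "\<forall>y\<in>A. fst (c y) \<in> {1..N} \<and> snd (c y) \<in> A \<and> y = f (fst (c y)) (snd (c y))"
    by (rule bchoice[THEN exE])
  define I where "I = fst \<circ> c"
  define Z where "Z = snd \<circ> c"
  have IZ: "I y \<in> {1..N} \<and> Z y \<in> A \<and> y = f (I y) (Z y)" if "y \<in> A" for y
    using c that by (simp add: I_def Z_def)
  define z where "z k = (Z ^^ k) a" for k
  have zA: "z k \<in> A" for k
    by (induction k) (use assms(2) IZ in \<open>auto simp: z_def\<close>)
  have wz: "word_comp f (I \<circ> z) k (z k) = a" for k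
  proof (induction k)
    case 0
    then show ?case by (simp add: z_def)
  next
    case (Suc k)
    have "f (I (z k)) (z (Suc k)) = z k" using IZ[OF zA[of k]] by (simp add: z_def)
    with Suc show ?case by simp
  qed
  show thesis
  proof (rule that)
    show "(I \<circ> z) k \<in> {1..N}" for k using IZ[OF zA[of k]] by simp
    show "a \<in> word_comp f (I \<circ> z) k ` A" for k using wz[of k] zA[of k] by (metis image_eqI)
  qed
qed

lemma basin_subset_fast_basin:
  fixes A :: "'a::metric_space set"
  assumes "ifs N f" and attr: "is_attractor N f A" and "point_fibred N f A"
    and "interior A \<noteq> {}"
  shows "basin N f A \<subseteq> fast_basin N f A"
proof
  fix x assume x: "x \<in> basin N f A"
  obtain a r where "r > 0" and ball: "ball a r \<subseteq> A"
    using assms(4) by (force simp: mem_interior)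
  have A_sub: "A \<subseteq> ifs_op N f A" using attr by (simp add: is_attractor_def)
  have aA: "a \<in> A" using ball \<open>r > 0\<close> by auto
  obtain w where w: "\<And>k. w k \<in> {1..N}" and a: "\<And>k. a \<in> word_comp f w k ` A"
    by (rule backward_word_through_point[OF A_sub aA]) blast
  obtain p where p: "\<And>C. C \<noteq> {} \<and> compact C \<and> C \<subseteq> basin N f A \<Longrightarrow>
      (\<lambda>k. hausdist (word_comp f w k ` C) {p}) \<longlonglongrightarrow> 0"
    using assms(3) w unfolding point_fibred_def by blast
  define C where "C = insert x A"
  have "A \<subseteq> basin N f A" by (rule attractor_subset_basin[OF attr])
  then have C: "C \<noteq> {} \<and> compact C \<and> C \<subseteq> basin N f A"
    using attr x unfolding C_def is_attractor_def by simp
  have images: "compact (word_comp f w k ` C)" for k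
  proof (rule compact_continuous_image)
    show "continuous_on C (word_comp f w k)"
      using assms(1) w by (rule continuous_on_word_comp[THEN continuous_on_subset]) simp
  qed (use C in simp)
  have "a \<in> word_comp f w k ` C" for k
    using a[of k] unfolding C_def by blast
  then have "(\<lambda>k. a) \<longlonglongrightarrow> p"
    by (rule tendsto_hausdist_singleton[OF images _ p[OF C]])
  then have "p = a" by (simp add: LIMSEQ_const_iff)
  moreover have "(\<lambda>k. word_comp f w k x) \<longlonglongrightarrow> p"
    by (rule tendsto_hausdist_singleton[OF images _ p[OF C]]) (simp add: C_def)
  ultimately obtain K where "\<forall>k\<ge>K. dist (word_comp f w k x) a < r"
    using metric_LIMSEQ_D \<open>r > 0\<close> by blast
  then have "dist (word_comp f w K x) a < r" by simp
  then have "x \<in> word_comp f w K -` A" using ball by (auto simp: dist_commute)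
  moreover have "word_comp f w K -` A \<subseteq> (ifs_inv_op N f ^^ K) A"
    using w by (rule word_comp_vimage_subset)
  ultimately show "x \<in> fast_basin N f A"
    unfolding fast_basin_def by blast
qed

lemma interior_Union_closed_empty_interior:
  fixes \<G> :: "'a::complete_space set set"
  assumes "countable \<G>" and "\<And>T. T \<in> \<G> \<Longrightarrow> closed T \<and> interior T = {}"
  shows "interior (\<Union>\<G>) = {}"
proof -
  have "euclidean interior_of \<Union>\<G> = {}"
    by (rule Baire_category_alt) (use assms completely_metrizable_space_euclidean in auto)
  then show ?thesis by simp
qed

lemma interior_vimage_homeomorphism:
  assumes "homeomorphism UNIV UNIV h g"
  shows "interior (h -` S) = h -` interior S"
proof (rule antisym)
  have "open (h ` interior (h -` S))"
    using homeomorphism_imp_open_map[OF assms] by simp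
  moreover have "h ` interior (h -` S) \<subseteq> S"
    using interior_subset by blast
  ultimately have "h ` interior (h -` S) \<subseteq> interior S"
    by (simp add: interior_maximal)
  then show "interior (h -` S) \<subseteq> h -` interior S" by blast
  have "continuous_on UNIV h" using assms homeomorphism_cont1 by blast
  then have "open (h -` interior S)" by (simp add: continuous_on_open_vimage)
  then show "h -` interior S \<subseteq> interior (h -` S)"
    using interior_subset[of S] by (intro interior_maximal) auto
qed

lemma ifs_inv_op_closed_empty_interior:
  fixes S :: "'a::complete_space set"
  assumes "ifs N f" and "invertible_ifs N f"
    and "closed S" and "interior S = {}"
  shows "closed (ifs_inv_op N f S) \<and> interior (ifs_inv_op N f S) = {}"
proof -
  have preimages: "closed (f i -` S) \<and> interior (f i -` S) = {}" if "i \<in> {1..N}" for i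
  proof
    have "continuous_on UNIV (f i)" using that assms(1) unfolding ifs_def by simp
    with assms(3) show "closed (f i -` S)" by (rule closed_vimage)
    have "\<exists>g. homeomorphism UNIV UNIV (f i) g"
      using that assms(2) unfolding invertible_ifs_def by simp
    then obtain g where hom: "homeomorphism UNIV UNIV (f i) g" ..
    show "interior (f i -` S) = {}"
      using interior_vimage_homeomorphism[OF hom, of S] assms(4) by simp
  qed
  have "closed (\<Union>i\<in>{1..N}. f i -` S)"
    using preimages by (intro closed_UN) auto
  moreover have "interior (\<Union>i\<in>{1..N}. f i -` S) = {}"
  proof (rule interior_Union_closed_empty_interior)
    show "countable ((\<lambda>i. f i -` S) ` {1..N})"
      by (intro countable_finite finite_imageI) simp
  qed (use preimages in blast)
  ultimately show ?thesis
    unfolding ifs_inv_op_def by simp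
qed

lemma interior_fast_basin_empty:
  fixes A :: "'a::complete_space set"
  assumes "ifs N f" and "invertible_ifs N f"
    and "closed A" and "interior A = {}"
  shows "interior (fast_basin N f A) = {}"
proof -
  have iterates: "closed ((ifs_inv_op N f ^^ k) A) \<and> interior ((ifs_inv_op N f ^^ k) A) = {}" for k
    by (induction k) (use assms ifs_inv_op_closed_empty_interior in auto)
  show ?thesis
    unfolding fast_basin_def by (rule interior_Union_closed_empty_interior) (use iterates in auto)
qed

theorem mainTheorem5:
  fixes f :: "nat \<Rightarrow> 'a::complete_space \<Rightarrow> 'a" and N :: nat and A :: "'a set"
  assumes "ifs N f" and "invertible_ifs N f"
    and "is_attractor N f A" and "point_fibred N f A"
  shows "ifs_inv_op N f (fast_basin N f A) = fast_basin N f A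
         \<and> fast_basin N f A = \<Inter>{D. ifs_inv_op N f D = D \<and> A \<subseteq> D}
         \<and> (interior A \<noteq> {} \<longrightarrow> basin N f A \<subseteq> fast_basin N f A)
         \<and> (interior A = {} \<longrightarrow> interior (fast_basin N f A) = {})"
proof -
  have A_sub: "A \<subseteq> ifs_inv_op N f A"
    using assms(3) is_attractor_imp_pos[OF assms(3)]
    by (intro subset_ifs_inv_op) (simp_all add: is_attractor_def)
  have "closed A"
    using assms(3) by (simp add: is_attractor_def compact_imp_closed)
  then show ?thesis
    using ifs_inv_op_fast_basin[OF A_sub] fast_basin_eq_Inter_invariant[OF A_sub]
      basin_subset_fast_basin[OF assms(1,3,4)] interior_fast_basin_empty[OF assms(1,2)]
    by blast
qed

end
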